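(* Let $\hat{H}=\sum_j h_j\hat{\gamma}_j$ be a Hamiltonian on a finite-dimensional Hilbert space with finitely many terms, each $\hat{\gamma}_j$ Hermitian with $\|\hat{\gamma}_j\|=1$ and $h_j\in\mathbb{R}$, with commutativity graph $G$ and graph distance $d_{ij}$ on $G$. Let $H_{ij}=2\sqrt{|h_i||h_j|}$ if $\langle ij\rangle$ is an edge of $G$ and $H_{ij}=0$ otherwise, and $G_{ij}(t)=[e^{Ht}]_{ij}$. Assume there are constants $u>0$, $c>0$ such that $G_{ij}(t)\le c\,(ut/d_{ij})^{d_{ij}}$ for all vertices $i,j$ with $1\le d_{ij}<\infty$ and all $0\le t\le d_{ij}/u$. Let $\hat{A},\hat{B}$ be operators with $X=S(\hat{A})$, $Y=S(\hat{B})$, $X\cap Y=\emptyset$, and $d_{XY}=\min_{i\in X,j\in Y}d_{ij}<\infty$. Then for all $0\le t\le d_{XY}/u$, $$\|[\hat{A}(t),\hat{B}]\|-\|[\hat{A},\hat{B}]\|\le \frac{4ce}{u}\,\|\hat{A}\|\,\|\hat{B}\|\,h_{XY}\left(\frac{ut}{d_{XY}+1}\right)^{d_{XY}+1},$$ where $h_{XY}=\sum_{i\in X,j\in Y,\,d_{ij}<\infty}\sqrt{|h_ih_j|}\,e^{d_{XY}-d_{ij}}$.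
   Context: $\|\cdot\|$ is the operator norm and $\hat{A}(t)=e^{i\hat{H}t}\hat{A}e^{-i\hat{H}t}$. The commutativity graph $G$ has one vertex per term $\hat{\gamma}_j$, with an edge between $i\neq j$ iff $[\hat{\gamma}_i,\hat{\gamma}_j]\ne0$. The support of an operator $\hat{A}$ on the commutativity graph is $S(\hat{A})=\{i:[\hat{\gamma}_i,\hat{A}]\ne0\}$. *)

theory Defs
  imports "HOL-Analysis.Analysis" "HOL-Library.Extended_Nat"
begin

text \<open>Matrices over a field; the finite-dimensional Hilbert space is complex^'n
  with its Euclidean (L2) norm.\<close>

fun mat_pow :: "'a::semiring_1^'n^'n \<Rightarrow> nat \<Rightarrow> 'a^'n^'n" where
  "mat_pow M 0 = mat 1"
| "mat_pow M (Suc k) = M ** mat_pow M k"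

definition mexp :: "'a::{real_normed_field,banach}^'n::finite^'n \<Rightarrow> 'a^'n^'n" where
  "mexp M = (\<Sum>k. (\<chi> i j. (mat_pow M k $ i $ j) /\<^sub>R fact k))"

definition mscale :: "'a::times \<Rightarrow> 'a^'n^'m \<Rightarrow> 'a^'n^'m" where
  "mscale c M = (\<chi> i j. c * M $ i $ j)"

definition adjoint :: "complex^'n^'n \<Rightarrow> complex^'n^'n" where
  "adjoint M = (\<chi> i j. cnj (M $ j $ i))"

definition hermitian :: "complex^'n^'n \<Rightarrow> bool" where
  "hermitian M \<longleftrightarrow> adjoint M = M"

definition opnorm :: "complex^'n::finite^'n \<Rightarrow> real" where
  "opnorm M = onorm (\<lambda>x. M *v x)"

definition commutator :: "'a::ring_1^'n^'n \<Rightarrow> 'a^'n^'n \<Rightarrow> 'a^'n^'n" where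
  "commutator A B = A ** B - B ** A"

definition heis :: "complex^'n::finite^'n \<Rightarrow> real \<Rightarrow> complex^'n^'n \<Rightarrow> complex^'n^'n" where
  "heis H t A = mexp (mscale (\<i> * of_real t) H) ** A ** mexp (mscale (- \<i> * of_real t) H)"

definition cedge :: "('j \<Rightarrow> complex^'n^'n) \<Rightarrow> 'j \<Rightarrow> 'j \<Rightarrow> bool" where
  "cedge \<gamma> i j \<longleftrightarrow> i \<noteq> j \<and> commutator (\<gamma> i) (\<gamma> j) \<noteq> 0"

inductive walk :: "('j \<Rightarrow> 'j \<Rightarrow> bool) \<Rightarrow> nat \<Rightarrow> 'j \<Rightarrow> 'j \<Rightarrow> bool" for E where
  walk0: "walk E 0 i i"
| walkS: "E i k \<Longrightarrow> walk E n k j \<Longrightarrow> walk E (Suc n) i j"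

definition gdist :: "('j \<Rightarrow> 'j \<Rightarrow> bool) \<Rightarrow> 'j \<Rightarrow> 'j \<Rightarrow> enat" where
  "gdist E i j = (if \<exists>n. walk E n i j then enat (LEAST n. walk E n i j) else \<infinity>)"

definition supp :: "('j \<Rightarrow> complex^'n^'n) \<Rightarrow> complex^'n^'n \<Rightarrow> 'j set" where
  "supp \<gamma> A = {i. commutator (\<gamma> i) A \<noteq> 0}"

definition Hmat :: "('j::finite \<Rightarrow> complex^'n^'n) \<Rightarrow> ('j \<Rightarrow> real) \<Rightarrow> real^'j^'j" where
  "Hmat \<gamma> h = (\<chi> i j. if cedge \<gamma> i j then 2 * sqrt (\<bar>h i\<bar> * \<bar>h j\<bar>) else 0)"

end

theory Submission
  imports Defs
begin

text \<open>
  Work in the Banach algebra of complex matrices with the operator norm, where A(t) is the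
  conjugation of A by the exponential of a skew-Hermitian element, i.e. by a unitary.
  For a term gamma_l let C_l(t) = ||[A(t), gamma_l]||. Splitting H into the terms that commute
  with gamma_l and the others and passing to the interaction picture of the former gives
  C_l(t) <= C_l(0) + int_0^t sum_k K_lk C_k(s) ds, where K_lk = 2|h_k| on the edges of the
  commutativity graph. Iterating this inequality yields C(t) <= e^(tK) C(0) entrywise, and
  conjugating K by diag(sqrt |h|) turns it into the symmetric matrix H of the statement, so that
  |h_k| C_k(t) <= 2 ||A|| sum_(i in X) sqrt |h_i h_k| [e^(tH)]_ik. The same interaction-picture
  estimate for B, the hypothesis on [e^(sH)]_ik integrated over [0, t], and the inequalities
  (D + 1)^D <= e D^D and e^(d - D) D^d <= d^d for d >= D give the claim.
\<close>

section \<open>Heisenberg evolution in a Banach algebra\<close>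

definition bracket :: "'a::ring \<Rightarrow> 'a \<Rightarrow> 'a" where
  "bracket x y = x * y - y * x"

definition evolve :: "'a::{real_normed_algebra_1,banach} \<Rightarrow> 'a \<Rightarrow> real \<Rightarrow> 'a" where
  "evolve K a s = exp (s *\<^sub>R K) * a * exp (- (s *\<^sub>R K))"

lemma norm_bracket_le: "norm (bracket x y) \<le> 2 * norm x * norm (y :: 'a::real_normed_algebra)"
proof -
  have "norm (bracket x y) \<le> norm (x * y) + norm (y * x)"
    unfolding bracket_def by (rule norm_triangle_ineq4)
  also have "\<dots> \<le> norm x * norm y + norm y * norm x" by (intro add_mono norm_mult_ineq)
  finally show ?thesis by simp
qed

lemma norm_mult_contractions_le:
  fixes u y v :: "'a::real_normed_algebra"
  assumes "norm u \<le> 1" "norm v \<le> 1"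
  shows "norm (u * y * v) \<le> norm y"
proof -
  have "norm (u * y * v) \<le> norm u * norm y * norm v"
    by (meson norm_mult_ineq mult_right_mono norm_ge_zero order_trans)
  also have "\<dots> \<le> 1 * norm y * 1" using assms by (intro mult_mono) auto
  finally show ?thesis by simp
qed

lemma evolve_0 [simp]: "evolve K a 0 = a"
  by (simp add: evolve_def)

lemma norm_evolve_le: "(\<And>s. norm (exp (s *\<^sub>R K)) \<le> 1) \<Longrightarrow> norm (evolve K a s) \<le> norm a"
  unfolding evolve_def by (metis norm_mult_contractions_le scaleR_minus_left)

lemma has_vector_derivative_evolve:
  "(evolve K a has_vector_derivative bracket K (evolve K a s)) (at s within S)"
proof -
  have "(evolve K a has_vector_derivative
      (exp (s *\<^sub>R K) * a) * (exp (s *\<^sub>R (- K)) * (- K))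
        + (exp (s *\<^sub>R K) * K * a) * exp (s *\<^sub>R (- K)))
      (at s within S)"
    unfolding evolve_def scaleR_minus_right[symmetric]
    by (intro has_vector_derivative_mult has_vector_derivative_mult_left
        exp_scaleR_has_vector_derivative_right)
  moreover have "exp (s *\<^sub>R K) * K = K * exp (s *\<^sub>R K)"
    by (rule exp_times_scaleR_commute)
  ultimately show ?thesis
    by (simp add: evolve_def bracket_def algebra_simps)
qed

lemma continuous_on_evolve: "continuous_on S (evolve K a)"
  using has_vector_derivative_evolve
  by (meson continuous_at_imp_continuous_on has_vector_derivative_continuous)

lemma norm_le_norm_0_plus_integral:
  fixes W :: "real \<Rightarrow> 'a::banach"
  assumes "0 \<le> t"
    and "\<And>s. s \<in> {0..t} \<Longrightarrow> (W has_vector_derivative W' s) (at s within {0..t})"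
    and "\<And>s. s \<in> {0..t} \<Longrightarrow> norm (W' s) \<le> F s"
    and "F integrable_on {0..t}"
  shows "norm (W t) \<le> norm (W 0) + integral {0..t} F"
proof -
  have ftc: "(W' has_integral W t - W 0) {0..t}"
    using assms(1,2) by (rule fundamental_theorem_of_calculus) auto
  have "norm (W t - W 0) \<le> integral {0..t} F"
    using integral_norm_bound_integral[OF has_integral_integrable[OF ftc] assms(4,3)]
    by (simp add: integral_unique[OF ftc])
  then show ?thesis by (metis add.commute norm_triangle_sub order_trans add_left_mono)
qed

lemma bracket_interaction_picture:
  assumes "Kc * x = x * Kc"
  shows "bracket (bracket (Kc + Kn) b) x - Kc * bracket b x + bracket b x * Kc
    = bracket (bracket Kn b) x"
proof -
  have "Kc * (x * z) = x * (Kc * z)" for z by (metis assms mult.assoc)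
  then show ?thesis using assms by (simp add: bracket_def algebra_simps)
qed

lemma has_vector_derivative_interaction_picture:
  assumes "Kc * x = x * Kc"
  shows "((\<lambda>s. exp (- (s *\<^sub>R Kc)) * bracket (evolve (Kc + Kn) a s) x * exp (s *\<^sub>R Kc))
    has_vector_derivative
      exp (- (s *\<^sub>R Kc)) * bracket (bracket Kn (evolve (Kc + Kn) a s)) x * exp (s *\<^sub>R Kc))
    (at s within S)"
proof -
  define c where "c s = bracket (evolve (Kc + Kn) a s) x" for s
  define c' where "c' s = bracket (bracket (Kc + Kn) (evolve (Kc + Kn) a s)) x" for s
  have "(c has_vector_derivative c' s) (at s within S)"
    unfolding c_def c'_def bracket_def
    by (intro has_vector_derivative_diff has_vector_derivative_mult_left
        has_vector_derivative_mult_right has_vector_derivative_evolve[unfolded bracket_def])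
  then have "((\<lambda>s. exp (s *\<^sub>R (- Kc)) * c s * exp (s *\<^sub>R Kc)) has_vector_derivative
      (exp (s *\<^sub>R (- Kc)) * c s) * (exp (s *\<^sub>R Kc) * Kc) +
      (exp (s *\<^sub>R (- Kc)) * c' s + (exp (s *\<^sub>R (- Kc)) * (- Kc)) * c s) * exp (s *\<^sub>R Kc))
      (at s within S)"
    by (intro has_vector_derivative_mult exp_scaleR_has_vector_derivative_right)
  moreover have "(exp (s *\<^sub>R (- Kc)) * c s) * (exp (s *\<^sub>R Kc) * Kc) +
      (exp (s *\<^sub>R (- Kc)) * c' s + (exp (s *\<^sub>R (- Kc)) * (- Kc)) * c s) * exp (s *\<^sub>R Kc)
    = exp (s *\<^sub>R (- Kc)) * (c' s - Kc * c s + c s * Kc) * exp (s *\<^sub>R Kc)"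
    using exp_times_scaleR_commute[of s Kc] by (simp add: algebra_simps)
  ultimately show ?thesis
    unfolding c_def c'_def bracket_interaction_picture[OF assms] scaleR_minus_right by simp
qed

(* In the interaction picture W s = e^(-s Kc) [a(s), x] e^(s Kc) only Kn drives the evolution,
   because Kc commutes with x. *)
lemma norm_bracket_evolve_le:
  fixes Kc Kn a x :: "'a::{real_normed_algebra_1,banach}"
  assumes commute: "Kc * x = x * Kc"
    and contraction: "\<And>s. norm (exp (s *\<^sub>R Kc)) \<le> 1"
    and "0 \<le> t" and "continuous_on {0..t} F"
    and F: "\<And>s. s \<in> {0..t} \<Longrightarrow> norm (bracket (bracket Kn (evolve (Kc + Kn) a s)) x) \<le> F s"
  shows "norm (bracket (evolve (Kc + Kn) a t) x) \<le> norm (bracket a x) + integral {0..t} F"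
proof -
  define W where "W s = exp (- (s *\<^sub>R Kc)) * bracket (evolve (Kc + Kn) a s) x * exp (s *\<^sub>R Kc)"
    for s
  have contraction': "norm (exp (- (s *\<^sub>R Kc))) \<le> 1" for s
    using contraction[of "- s"] by simp
  have "exp (t *\<^sub>R Kc) * W t * exp (- (t *\<^sub>R Kc))
      = (exp (t *\<^sub>R Kc) * exp (- (t *\<^sub>R Kc))) * bracket (evolve (Kc + Kn) a t) x
        * (exp (t *\<^sub>R Kc) * exp (- (t *\<^sub>R Kc)))"
    by (simp only: W_def mult.assoc)
  then have "bracket (evolve (Kc + Kn) a t) x = exp (t *\<^sub>R Kc) * W t * exp (- (t *\<^sub>R Kc))"
    by (simp add: exp_minus_inverse)
  then have "norm (bracket (evolve (Kc + Kn) a t) x) \<le> norm (W t)"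
    by (simp only: norm_mult_contractions_le[OF contraction contraction'])
  also have "\<dots> \<le> norm (W 0) + integral {0..t} F"
  proof (rule norm_le_norm_0_plus_integral[OF \<open>0 \<le> t\<close>])
    show "(W has_vector_derivative
        exp (- (s *\<^sub>R Kc)) * bracket (bracket Kn (evolve (Kc + Kn) a s)) x * exp (s *\<^sub>R Kc))
        (at s within {0..t})" for s
      unfolding W_def by (rule has_vector_derivative_interaction_picture[OF commute])
    show "norm (exp (- (s *\<^sub>R Kc)) * bracket (bracket Kn (evolve (Kc + Kn) a s)) x
        * exp (s *\<^sub>R Kc)) \<le> F s" if "s \<in> {0..t}" for s
      using norm_mult_contractions_le[OF contraction' contraction] F[OF that] by (rule order_trans)
    show "F integrable_on {0..t}"
      using \<open>continuous_on {0..t} F\<close> by (rule integrable_continuous_real)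
  qed
  also have "W 0 = bracket a x" by (simp add: W_def)
  finally show ?thesis .
qed

section \<open>Complex matrices with the operator norm\<close>

lemma opnorm_nonneg: "0 \<le> opnorm M"
  by (simp add: opnorm_def onorm_pos_le)

lemma norm_mult_vec_le_opnorm: "norm (M *v x) \<le> opnorm M * norm x"
  unfolding opnorm_def by (rule onorm) simp

lemma opnorm_le: "0 \<le> b \<Longrightarrow> (\<And>x. norm (M *v x) \<le> b * norm x) \<Longrightarrow> opnorm M \<le> b"
  unfolding opnorm_def by (rule onorm_bound)

lemma norm_entry_le_opnorm: "norm (M $ i $ j) \<le> opnorm M"
proof -
  have "norm (M $ i $ j) = norm ((M *v axis j 1) $ i)"
    by (simp add: matrix_vector_mult_def axis_def if_distrib cong: if_cong)
  also have "\<dots> \<le> norm (M *v axis j 1)" by (rule Finite_Cartesian_Product.norm_nth_le)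
  also have "\<dots> \<le> opnorm M" using norm_mult_vec_le_opnorm[of M "axis j 1"] by (simp add: norm_axis_1)
  finally show ?thesis .
qed

lemma opnorm_eq_0_iff: "opnorm M = 0 \<longleftrightarrow> M = 0"
proof
  show "opnorm M = 0 \<Longrightarrow> M = 0"
    using norm_entry_le_opnorm[of M] by (simp add: vec_eq_iff)
  show "M = 0 \<Longrightarrow> opnorm M = 0"
    by (simp add: opnorm_def onorm_zero)
qed

lemma norm_le_sum_norm_nth: "norm (x :: 'a::real_normed_vector^'n) \<le> (\<Sum>i\<in>UNIV. norm (x $ i))"
  unfolding norm_vec_def by (rule L2_set_le_sum) simp

lemma opnorm_le_sum_entries:
  fixes M :: "complex^'n::finite^'n"
  shows "opnorm M \<le> (\<Sum>i\<in>UNIV. \<Sum>j\<in>UNIV. norm (M $ i $ j))"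
proof (rule opnorm_le)
  fix x :: "complex^'n"
  have "norm (M *v x) \<le> (\<Sum>i\<in>UNIV. norm (\<Sum>j\<in>UNIV. M $ i $ j * x $ j))"
    using norm_le_sum_norm_nth[of "M *v x"] by (simp add: matrix_vector_mult_def)
  also have "\<dots> \<le> (\<Sum>i\<in>UNIV. \<Sum>j\<in>UNIV. norm (M $ i $ j) * norm x)"
    by (intro sum_mono order_trans[OF norm_sum])
      (simp add: norm_mult mult_left_mono Finite_Cartesian_Product.norm_nth_le)
  finally show "norm (M *v x) \<le> (\<Sum>i\<in>UNIV. \<Sum>j\<in>UNIV. norm (M $ i $ j)) * norm x"
    by (simp add: sum_distrib_right)
qed (simp add: sum_nonneg)

lemma opnorm_triangle: "opnorm (M + N) \<le> opnorm M + opnorm N"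
  by (simp add: opnorm_def matrix_vector_mult_add_rdistrib onorm_triangle)

lemma opnorm_scaleR: "opnorm (r *\<^sub>R M) = \<bar>r\<bar> * opnorm M"
proof -
  have "(\<lambda>v. (r *\<^sub>R M) *v v) = (\<lambda>v. r *\<^sub>R (M *v v))"
    by (simp add: fun_eq_iff vec_eq_iff matrix_vector_mult_def scaleR_sum_right)
  then show ?thesis by (simp add: opnorm_def onorm_scaleR)
qed

lemma opnorm_mult_le: "opnorm (M ** N) \<le> opnorm M * opnorm N"
proof -
  have "(\<lambda>v. (M ** N) *v v) = (\<lambda>v. M *v v) \<circ> (\<lambda>v. N *v v)"
    by (simp add: fun_eq_iff matrix_vector_mul_assoc)
  then have "opnorm (M ** N) = onorm ((\<lambda>v. M *v v) \<circ> (\<lambda>v. N *v v))"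
    by (simp only: opnorm_def)
  then show ?thesis by (simp add: opnorm_def onorm_compose)
qed

(* Matrices normed by the operator norm form a Banach algebra, so that the library's exp,
   derivatives and integrals apply to them. *)
typedef ('n::finite) opmat = "UNIV :: (complex^'n^'n) set"
  morphisms to_mat of_mat ..

setup_lifting type_definition_opmat

instantiation opmat :: (finite) real_normed_vector
begin

lift_definition norm_opmat :: "'a opmat \<Rightarrow> real" is opnorm .
lift_definition zero_opmat :: "'a opmat" is 0 .
lift_definition plus_opmat :: "'a opmat \<Rightarrow> 'a opmat \<Rightarrow> 'a opmat" is "(+)" .
lift_definition minus_opmat :: "'a opmat \<Rightarrow> 'a opmat \<Rightarrow> 'a opmat" is "(-)" .
lift_definition uminus_opmat :: "'a opmat \<Rightarrow> 'a opmat" is uminus .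
lift_definition scaleR_opmat :: "real \<Rightarrow> 'a opmat \<Rightarrow> 'a opmat" is scaleR .
definition dist_opmat :: "'a opmat \<Rightarrow> 'a opmat \<Rightarrow> real" where
  "dist_opmat a b = norm (a - b)"
definition uniformity_opmat :: "('a opmat \<times> 'a opmat) filter" where
  "uniformity_opmat = (INF e\<in>{0 <..}. principal {(x, y). dist x y < e})"
definition open_opmat :: "'a opmat set \<Rightarrow> bool" where
  "open_opmat S = (\<forall>x\<in>S. \<forall>\<^sub>F (x', y) in uniformity. x' = x \<longrightarrow> y \<in> S)"
definition sgn_opmat :: "'a opmat \<Rightarrow> 'a opmat" where
  "sgn_opmat x = inverse (norm x) *\<^sub>R x"

instance
proof
  fix x y z :: "'a opmat" and a b :: real
  show "norm x = 0 \<longleftrightarrow> x = 0" by transfer (rule opnorm_eq_0_iff)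
  show "norm (x + y) \<le> norm x + norm y" by transfer (rule opnorm_triangle)
  show "norm (a *\<^sub>R x) = \<bar>a\<bar> * norm x" by transfer (rule opnorm_scaleR)
  show "a *\<^sub>R (x + y) = a *\<^sub>R x + a *\<^sub>R y" by transfer (simp add: scaleR_right_distrib)
  show "(a + b) *\<^sub>R x = a *\<^sub>R x + b *\<^sub>R x" by transfer (simp add: scaleR_left_distrib)
  show "a *\<^sub>R b *\<^sub>R x = (a * b) *\<^sub>R x" by transfer simp
  show "1 *\<^sub>R x = x" by transfer simp
  show "x + y + z = x + (y + z)" by transfer (simp add: add.assoc)
  show "x + y = y + x" by transfer (simp add: add.commute)
  show "0 + x = x" by transfer simp
  show "- x + x = 0" by transfer simp
  show "x - y = x + - y" by transfer simp
qed (simp_all add: dist_opmat_def sgn_opmat_def uniformity_opmat_def open_opmat_def)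

end

instantiation opmat :: (finite) ring_1
begin

lift_definition one_opmat :: "'a opmat" is "mat 1" .
lift_definition times_opmat :: "'a opmat \<Rightarrow> 'a opmat \<Rightarrow> 'a opmat" is "(**)" .

instance
proof
  fix x y z :: "'a opmat"
  show "x * y * z = x * (y * z)" by transfer (simp add: matrix_mul_assoc)
  show "1 * x = x" by transfer (simp add: matrix_mul_lid)
  show "x * 1 = x" by transfer (simp add: matrix_mul_rid)
  show "(x + y) * z = x * z + y * z"
    by transfer (simp add: vec_eq_iff matrix_matrix_mult_def distrib_right sum.distrib)
  show "x * (y + z) = x * y + x * z"
    by transfer (simp add: vec_eq_iff matrix_matrix_mult_def distrib_left sum.distrib)
  show "(0::'a opmat) \<noteq> 1" by transfer (simp add: vec_eq_iff mat_def)
qed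

end

instance opmat :: (finite) real_normed_algebra_1
proof
  fix x y :: "'a opmat" and a :: real
  show "a *\<^sub>R x * y = a *\<^sub>R (x * y)"
    by transfer (simp add: vec_eq_iff matrix_matrix_mult_def scaleR_sum_right)
  show "x * a *\<^sub>R y = a *\<^sub>R (x * y)"
    by transfer (simp add: vec_eq_iff matrix_matrix_mult_def scaleR_sum_right)
  show "norm (x * y) \<le> norm x * norm y" by transfer (rule opnorm_mult_le)
  show "norm (1::'a opmat) = 1" by transfer (simp add: opnorm_def onorm_id)
qed

lemma to_mat_bounded_linear: "bounded_linear (to_mat :: 'n::finite opmat \<Rightarrow> _)"
proof
  fix x y :: "'n opmat" and r
  show "to_mat (x + y) = to_mat x + to_mat y" by transfer simp
  show "to_mat (r *\<^sub>R x) = r *\<^sub>R to_mat x" by transfer simp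
  have "norm (to_mat x) \<le> norm x * (CARD('n) * CARD('n))" for x :: "'n opmat"
  proof -
    have "norm (to_mat x) \<le> (\<Sum>i\<in>UNIV. \<Sum>j\<in>UNIV. norm (to_mat x $ i $ j))"
      by (intro order_trans[OF norm_le_sum_norm_nth] sum_mono norm_le_sum_norm_nth)
    also have "\<dots> \<le> (\<Sum>i\<in>(UNIV::'n set). \<Sum>j\<in>(UNIV::'n set). norm x)"
      by (intro sum_mono) (simp add: norm_opmat.rep_eq norm_entry_le_opnorm)
    finally show ?thesis by (simp add: mult_ac)
  qed
  then show "\<exists>K. \<forall>x::'n opmat. norm (to_mat x) \<le> norm x * K" by blast
qed

lemma of_mat_bounded_linear: "bounded_linear (of_mat :: complex^'n::finite^'n \<Rightarrow> 'n opmat)"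
proof
  fix x y :: "complex^'n^'n" and r
  show "of_mat (x + y) = of_mat x + of_mat y" by transfer simp
  show "of_mat (r *\<^sub>R x) = r *\<^sub>R of_mat x" by transfer simp
  have "norm (of_mat M) \<le> norm M * (CARD('n) * CARD('n))" for M :: "complex^'n^'n"
  proof -
    have "norm (of_mat M) \<le> (\<Sum>i\<in>UNIV. \<Sum>j\<in>UNIV. norm (M $ i $ j))"
      by (simp add: norm_opmat.abs_eq opnorm_le_sum_entries)
    also have "\<dots> \<le> (\<Sum>i\<in>(UNIV::'n set). \<Sum>j\<in>(UNIV::'n set). norm M)"
      by (intro sum_mono) (meson Finite_Cartesian_Product.norm_nth_le order_trans)
    finally show ?thesis by (simp add: mult_ac)
  qed
  then show "\<exists>K. \<forall>M::complex^'n^'n. norm (of_mat M) \<le> norm M * K" by blast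
qed

instance opmat :: (finite) banach
proof
  fix X :: "nat \<Rightarrow> 'a opmat"
  assume "Cauchy X"
  then have "Cauchy (\<lambda>n. to_mat (X n))" by (rule bounded_linear.Cauchy[OF to_mat_bounded_linear])
  then obtain L where "(\<lambda>n. to_mat (X n)) \<longlonglongrightarrow> L" using Cauchy_convergent_iff convergent_def by blast
  then have "(\<lambda>n. of_mat (to_mat (X n))) \<longlonglongrightarrow> of_mat L"
    by (rule bounded_linear.tendsto[OF of_mat_bounded_linear])
  then show "convergent X" by (auto simp: to_mat_inverse convergent_def)
qed

lemma norm_of_mat: "norm (of_mat M) = opnorm M"
  by (simp add: norm_opmat.abs_eq)

lemma of_mat_mult: "of_mat (M ** N) = of_mat M * of_mat N"
  by (simp add: times_opmat.abs_eq)

lemma of_mat_diff: "of_mat (M - N) = of_mat M - of_mat N"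
  by (simp add: minus_opmat.abs_eq)

lemma of_mat_sum: "of_mat (\<Sum>j\<in>S. f j) = (\<Sum>j\<in>S. of_mat (f j))"
  by (rule linear_sum[OF bounded_linear.linear[OF of_mat_bounded_linear]])

lemma of_mat_scaleR: "of_mat (r *\<^sub>R M) = r *\<^sub>R of_mat M"
  by (simp add: scaleR_opmat.abs_eq)

lemma to_mat_power: "to_mat (x ^ k) = mat_pow (to_mat x) k"
  by (induction k) (simp_all add: one_opmat.rep_eq times_opmat.rep_eq)

lemma of_mat_mexp: "of_mat (mexp M) = exp (of_mat M)"
proof -
  have "to_mat (exp (of_mat M)) = (\<Sum>k. to_mat (of_mat M ^ k /\<^sub>R fact k))"
    unfolding exp_def by (rule bounded_linear.suminf[OF to_mat_bounded_linear summable_exp_generic])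
  also have "\<dots> = mexp M"
    unfolding mexp_def
    by (rule arg_cong[where f = suminf])
      (simp add: fun_eq_iff vec_eq_iff scaleR_opmat.rep_eq to_mat_power of_mat_inverse)
  finally show ?thesis by (metis to_mat_inverse)
qed

lemma of_mat_commutator: "of_mat (commutator M N) = of_mat M * of_mat N - of_mat N * of_mat M"
  by (simp add: commutator_def of_mat_mult of_mat_diff)

section \<open>Adjoints and unitary evolution\<close>

lift_definition adj :: "'n::finite opmat \<Rightarrow> 'n opmat" is adjoint .

lemma adjoint_mult: "adjoint (A ** B) = adjoint B ** adjoint A"
  by (simp add: adjoint_def vec_eq_iff matrix_matrix_mult_def cnj_sum mult.commute)

lemma adj_mult: "adj (x * y) = adj y * adj x"
  by transfer (rule adjoint_mult)

lemma adj_one: "adj 1 = 1"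
  by transfer (simp add: adjoint_def vec_eq_iff mat_def)

lemma adj_scaleR: "adj (r *\<^sub>R x) = r *\<^sub>R adj x"
  by transfer (simp add: adjoint_def vec_eq_iff)

lemma adj_bounded_linear: "bounded_linear (adj :: 'n::finite opmat \<Rightarrow> 'n opmat)"
proof
  fix x y :: "'n opmat" and r
  show "adj (x + y) = adj x + adj y" by transfer (simp add: adjoint_def vec_eq_iff)
  show "adj (r *\<^sub>R x) = r *\<^sub>R adj x" by (rule adj_scaleR)
  have "norm (adj x) \<le> norm x * (CARD('n) * CARD('n))" for x :: "'n opmat"
  proof -
    have "norm (adj x) \<le> (\<Sum>i\<in>UNIV. \<Sum>j\<in>UNIV. norm (to_mat (adj x) $ i $ j))"
      by (simp add: norm_opmat.rep_eq opnorm_le_sum_entries)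
    also have "\<dots> \<le> (\<Sum>i\<in>(UNIV::'n set). \<Sum>j\<in>(UNIV::'n set). norm x)"
      by (intro sum_mono) (simp add: adj.rep_eq adjoint_def norm_opmat.rep_eq norm_entry_le_opnorm)
    finally show ?thesis by (simp add: mult_ac)
  qed
  then show "\<exists>K. \<forall>x::'n opmat. norm (adj x) \<le> norm x * K" by blast
qed

lemma adj_power: "adj (x ^ n) = adj x ^ n"
  by (induction n) (simp_all add: adj_one adj_mult power_commutes)

lemma adj_exp: "adj (exp x) = exp (adj x)"
proof -
  have "adj (exp x) = (\<Sum>n. adj (x ^ n /\<^sub>R fact n))"
    unfolding exp_def by (rule bounded_linear.suminf[OF adj_bounded_linear summable_exp_generic])
  then show ?thesis
    by (simp add: exp_def adj_power adj_scaleR)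
qed

lemma adj_sum_scaleR_hermitian:
  assumes "\<And>j. adj (g j) = g j"
  shows "adj (\<Sum>j\<in>S. w j *\<^sub>R g j) = (\<Sum>j\<in>S. w j *\<^sub>R g j)"
  using assms by (simp add: linear_sum[OF bounded_linear.linear[OF adj_bounded_linear]] adj_scaleR)

lemma mat_mult_nth: "(mat c ** M) $ i $ j = c * M $ i $ j"
  by (auto simp: matrix_matrix_mult_def mat_def if_distrib if_distribR sum.delta cong: if_cong)

lemma mult_mat_nth: "(M ** mat c) $ i $ j = M $ i $ j * c"
  by (auto simp: matrix_matrix_mult_def mat_def if_distrib if_distribR sum.delta' cong: if_cong)

lemma mat_mult_vec_nth: "(mat c *v x) $ i = c * x $ i"
  by (auto simp: matrix_vector_mult_def mat_def if_distrib if_distribR sum.delta cong: if_cong)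

definition imag_unit :: "'n::finite opmat" where
  "imag_unit = of_mat (mat \<i>)"

lemma imag_unit_commute: "imag_unit * x = x * imag_unit"
  unfolding imag_unit_def
  by transfer (simp add: vec_eq_iff mat_mult_nth mult_mat_nth mult.commute)

lemma adj_imag_unit: "adj imag_unit = - imag_unit"
  unfolding imag_unit_def by transfer (simp add: adjoint_def vec_eq_iff mat_def)

lemma norm_imag_unit_le: "norm (imag_unit :: 'n::finite opmat) \<le> 1"
proof -
  have "norm (mat \<i> *v x) = norm x" for x :: "complex^'n"
    by (simp add: norm_vec_def mat_mult_vec_nth norm_mult)
  then show ?thesis
    unfolding imag_unit_def norm_of_mat by (intro opnorm_le) simp_all
qed

lemma sum_cnj_mult_vec_adjoint:
  "(\<Sum>i\<in>UNIV. cnj ((U *v x) $ i) * (V *v y) $ i)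
    = (\<Sum>k\<in>UNIV. cnj (x $ k) * ((adjoint U ** V) *v y) $ k)"
proof -
  have "(\<Sum>i\<in>UNIV. cnj ((U *v x) $ i) * (V *v y) $ i)
      = (\<Sum>i\<in>UNIV. \<Sum>k\<in>UNIV. \<Sum>j\<in>UNIV. cnj (x $ k) * (cnj (U $ i $ k) * V $ i $ j * y $ j))"
    by (simp add: matrix_vector_mult_def cnj_sum sum_distrib_left sum_distrib_right mult_ac)
  also have "\<dots> = (\<Sum>k\<in>UNIV. \<Sum>i\<in>UNIV. \<Sum>j\<in>UNIV. cnj (x $ k) * (cnj (U $ i $ k) * V $ i $ j * y $ j))"
    by (rule sum.swap)
  also have "\<dots> = (\<Sum>k\<in>UNIV. \<Sum>j\<in>UNIV. \<Sum>i\<in>UNIV. cnj (x $ k) * (cnj (U $ i $ k) * V $ i $ j * y $ j))"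
    by (rule sum.cong[OF refl], rule sum.swap)
  also have "\<dots> = (\<Sum>k\<in>UNIV. cnj (x $ k) * ((adjoint U ** V) *v y) $ k)"
    by (simp add: matrix_vector_mult_def matrix_matrix_mult_def adjoint_def
        sum_distrib_left sum_distrib_right mult_ac)
  finally show ?thesis .
qed

lemma norm_mult_vec_isometry:
  assumes "adjoint U ** U = mat 1"
  shows "norm (U *v x) = norm x"
proof -
  have norm_sq: "complex_of_real ((norm y)\<^sup>2) = (\<Sum>i\<in>UNIV. cnj (y $ i) * y $ i)"
    for y :: "complex^'n"
    by (simp add: norm_vec_def L2_set_def sum_nonneg of_real_sum complex_norm_square mult.commute
        del: of_real_power)
  have "complex_of_real ((norm (U *v x))\<^sup>2) = complex_of_real ((norm x)\<^sup>2)"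
    unfolding norm_sq sum_cnj_mult_vec_adjoint assms by simp
  then have "(norm (U *v x))\<^sup>2 = (norm x)\<^sup>2" using of_real_eq_iff by blast
  then show ?thesis by (simp add: power2_eq_iff_nonneg)
qed

lemma norm_le_1_if_unitary:
  assumes "adj u * u = 1"
  shows "norm u \<le> 1"
proof -
  have "adjoint (to_mat u) ** to_mat u = mat 1" using assms by transfer simp
  then show ?thesis
    by (simp add: norm_opmat.rep_eq opnorm_le norm_mult_vec_isometry)
qed

lemma norm_exp_imag_hermitian_le:
  assumes "adj y = y"
  shows "norm (exp (s *\<^sub>R (imag_unit * y))) \<le> 1"
proof (rule norm_le_1_if_unitary)
  let ?X = "s *\<^sub>R (imag_unit * y)"
  have "adj ?X = - ?X"
    using assms by (simp add: adj_mult adj_scaleR adj_imag_unit imag_unit_commute)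
  then show "adj (exp ?X) * exp ?X = 1"
    by (simp add: adj_exp exp_minus_inverse[of "- ?X", simplified])
qed

lemma norm_exp_imag_hermitian_sum_le:
  fixes g :: "'j::finite \<Rightarrow> 'n::finite opmat"
  assumes "\<And>j. adj (g j) = g j"
  shows "norm (exp (s *\<^sub>R (imag_unit * (\<Sum>j\<in>S. h j *\<^sub>R g j)))) \<le> 1"
  by (intro norm_exp_imag_hermitian_le adj_sum_scaleR_hermitian assms)

lemma of_mat_mscale_imag: "of_mat (mscale (\<i> * complex_of_real r) M) = r *\<^sub>R (imag_unit * of_mat M)"
  unfolding imag_unit_def
  by transfer
    (simp add: mscale_def vec_eq_iff mat_mult_nth scaleR_conv_of_real[where 'a = complex] mult_ac)

lemma of_mat_heis: "of_mat (heis H t A) = evolve (imag_unit * of_mat H) (of_mat A) t"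
proof -
  have "of_mat (mscale (- \<i> * complex_of_real t) H) = - (t *\<^sub>R (imag_unit * of_mat H))"
    using of_mat_mscale_imag[of "- t" H] by simp
  then show ?thesis
    by (simp add: heis_def evolve_def of_mat_mult of_mat_mexp of_mat_mscale_imag)
qed

lemma of_mat_sum_mscale_of_real:
  "of_mat (\<Sum>j\<in>S. mscale (complex_of_real (h j)) (M j)) = (\<Sum>j\<in>S. h j *\<^sub>R of_mat (M j))"
proof -
  have mscale_of_real: "mscale (complex_of_real r) N = r *\<^sub>R N" for r N
    by (simp add: mscale_def vec_eq_iff scaleR_conv_of_real[where 'a = complex])
  show ?thesis by (simp add: mscale_of_real of_mat_sum of_mat_scaleR)
qed

lemma bracket_sum_scaleR_left:
  fixes g :: "'j \<Rightarrow> 'a::real_algebra"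
  shows "bracket (\<Sum>j\<in>P. w j *\<^sub>R g j) a = (\<Sum>j\<in>P. w j *\<^sub>R bracket (g j) a)"
  unfolding bracket_def
  by (simp add: sum_distrib_right sum_distrib_left scaleR_diff_right sum_subtractf
      mult_scaleR_right)

lemma bracket_imag_unit_left: "bracket (imag_unit * z) a = imag_unit * bracket z a"
proof -
  have "a * (imag_unit * z) = imag_unit * (a * z)" by (metis mult.assoc imag_unit_commute)
  then show ?thesis by (simp add: bracket_def right_diff_distrib mult.assoc)
qed

lemma norm_imag_unit_mult_le: "norm (imag_unit * z) \<le> norm (z :: 'n::finite opmat)"
proof -
  have "norm (imag_unit * z) \<le> norm (imag_unit :: 'n opmat) * norm z" by (rule norm_mult_ineq)
  also have "\<dots> \<le> 1 * norm z" by (intro mult_right_mono norm_imag_unit_le) simp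
  finally show ?thesis by simp
qed

lemma norm_bracket_imag_sum_le:
  fixes g :: "'j \<Rightarrow> 'n::finite opmat"
  shows "norm (bracket (imag_unit * (\<Sum>j\<in>P. w j *\<^sub>R g j)) a)
    \<le> (\<Sum>j\<in>P. \<bar>w j\<bar> * norm (bracket a (g j)))"
proof -
  have "norm (bracket (imag_unit * (\<Sum>j\<in>P. w j *\<^sub>R g j)) a) \<le> norm (\<Sum>j\<in>P. w j *\<^sub>R bracket (g j) a)"
    unfolding bracket_imag_unit_left bracket_sum_scaleR_left by (rule norm_imag_unit_mult_le)
  also have "\<dots> \<le> (\<Sum>j\<in>P. \<bar>w j\<bar> * norm (bracket a (g j)))"
    by (rule order_trans[OF norm_sum]) (simp add: bracket_def norm_minus_commute)
  finally show ?thesis .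
qed

lemma norm_bracket_evolve_le_terms:
  fixes g :: "'j::finite \<Rightarrow> 'n::finite opmat" and h :: "'j \<Rightarrow> real"
  assumes herm: "\<And>j. adj (g j) = g j"
    and commute: "\<And>j. j \<notin> P \<Longrightarrow> g j * x = x * g j"
    and "0 \<le> t"
  defines "K \<equiv> imag_unit * (\<Sum>j\<in>UNIV. h j *\<^sub>R g j)"
  shows "norm (bracket (evolve K a t) x) \<le> norm (bracket a x)
    + integral {0..t} (\<lambda>s. 2 * norm x * (\<Sum>j\<in>P. \<bar>h j\<bar> * norm (bracket (evolve K a s) (g j))))"
proof -
  define Kc where "Kc = imag_unit * (\<Sum>j\<in>UNIV - P. h j *\<^sub>R g j)"
  define Kn where "Kn = imag_unit * (\<Sum>j\<in>P. h j *\<^sub>R g j)"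
  have K_split: "K = Kc + Kn"
    unfolding K_def Kc_def Kn_def by (simp add: sum.subset_diff[of P UNIV] distrib_left)
  have "(\<Sum>j\<in>UNIV - P. h j *\<^sub>R g j) * x = (\<Sum>j\<in>UNIV - P. h j *\<^sub>R (x * g j))"
    using commute by (simp add: sum_distrib_right)
  also have "\<dots> = x * (\<Sum>j\<in>UNIV - P. h j *\<^sub>R g j)"
    by (simp add: sum_distrib_left)
  finally have "Kc * x = x * Kc"
    unfolding Kc_def by (metis mult.assoc imag_unit_commute)
  moreover have "norm (exp (s *\<^sub>R Kc)) \<le> 1" for s
    unfolding Kc_def by (rule norm_exp_imag_hermitian_sum_le[of g, OF herm])
  moreover have "continuous_on {0..t}
      (\<lambda>s. 2 * norm x * (\<Sum>j\<in>P. \<bar>h j\<bar> * norm (bracket (evolve K a s) (g j))))"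
    unfolding bracket_def by (intro continuous_intros continuous_on_evolve)
  moreover have "norm (bracket (bracket Kn (evolve K a s)) x)
      \<le> 2 * norm x * (\<Sum>j\<in>P. \<bar>h j\<bar> * norm (bracket (evolve K a s) (g j)))" for s
  proof -
    have "norm (bracket (bracket Kn (evolve K a s)) x)
        \<le> 2 * norm (bracket Kn (evolve K a s)) * norm x"
      by (rule norm_bracket_le)
    also have "\<dots> \<le> 2 * (\<Sum>j\<in>P. \<bar>h j\<bar> * norm (bracket (evolve K a s) (g j))) * norm x"
      unfolding Kn_def by (intro mult_right_mono mult_left_mono norm_bracket_imag_sum_le) simp_all
    finally show ?thesis by (simp add: mult_ac)
  qed
  ultimately show ?thesis
    unfolding K_split by (intro norm_bracket_evolve_le \<open>0 \<le> t\<close>)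
qed

section \<open>Exponentials of real matrices and a Gronwall inequality\<close>

lemma has_integral_power_div_fact:
  assumes "0 \<le> t"
  shows "((\<lambda>s::real. s ^ m / fact m) has_integral t ^ Suc m / fact (Suc m)) {0..t}"
proof -
  have "((\<lambda>s. s ^ Suc m / fact (Suc m)) has_real_derivative s ^ m / fact m) (at s within {0..t})"
    for s :: real
    by (rule derivative_eq_intros refl | simp)+
  then show ?thesis
    using fundamental_theorem_of_calculus[OF assms, of "\<lambda>s. s ^ Suc m / fact (Suc m)"]
    by (simp add: has_real_derivative_iff_has_vector_derivative)
qed

lemma abs_mat_pow_nth_le:
  fixes M :: "real^'j::finite^'j"
  shows "\<bar>mat_pow M k $ i $ j\<bar> \<le> (\<Sum>i\<in>UNIV. \<Sum>j\<in>UNIV. \<bar>M $ i $ j\<bar>) ^ k"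
proof (induction k arbitrary: i j)
  case 0
  then show ?case by (simp add: mat_def)
next
  case (Suc k)
  let ?\<nu> = "\<Sum>i\<in>UNIV. \<Sum>j\<in>UNIV. \<bar>M $ i $ j\<bar>"
  have row: "(\<Sum>l\<in>UNIV. \<bar>M $ i $ l\<bar>) \<le> ?\<nu>"
    by (rule member_le_sum[where f = "\<lambda>i. \<Sum>l\<in>UNIV. \<bar>M $ i $ l\<bar>"]) (auto intro: sum_nonneg)
  have "\<bar>mat_pow M (Suc k) $ i $ j\<bar> \<le> (\<Sum>l\<in>UNIV. \<bar>M $ i $ l\<bar> * ?\<nu> ^ k)"
    by (auto simp: matrix_matrix_mult_def abs_mult intro!: order_trans[OF sum_abs] sum_mono
        mult_left_mono Suc.IH)
  also have "\<dots> \<le> ?\<nu> * ?\<nu> ^ k"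
    using row by (simp add: sum_distrib_right[symmetric] mult_right_mono sum_nonneg)
  finally show ?case by simp
qed

lemma sums_mexp_nth:
  fixes M :: "real^'j::finite^'j"
  shows "(\<lambda>k. mat_pow M k $ i $ j / fact k) sums mexp M $ i $ j"
proof -
  define \<nu> where "\<nu> = (\<Sum>i\<in>UNIV. \<Sum>j\<in>UNIV. \<bar>M $ i $ j\<bar>)"
  let ?T = "\<lambda>k. \<chi> i j. mat_pow M k $ i $ j /\<^sub>R fact k"
  have "summable ?T"
  proof (rule summable_comparison_test')
    show "summable (\<lambda>k. (CARD('j) * CARD('j)) * (\<nu> ^ k /\<^sub>R fact k))"
      by (intro summable_mult summable_exp_generic)
    have "norm (?T k) \<le> (\<Sum>i\<in>UNIV. \<Sum>j\<in>UNIV. norm (?T k $ i $ j))" for k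
      by (intro order_trans[OF norm_le_sum_norm_nth] sum_mono norm_le_sum_norm_nth)
    also have "\<dots> k \<le> (\<Sum>i\<in>(UNIV::'j set). \<Sum>j\<in>(UNIV::'j set). \<nu> ^ k /\<^sub>R fact k)" for k
      by (intro sum_mono) (simp add: \<nu>_def abs_mult mult_left_mono abs_mat_pow_nth_le)
    finally show "norm (?T k) \<le> (CARD('j) * CARD('j)) * (\<nu> ^ k /\<^sub>R fact k)" for k
      by (simp add: mult.assoc)
  qed
  moreover have "bounded_linear (\<lambda>x::real^'j^'j. x $ i $ j)"
    using bounded_linear_compose[OF bounded_linear_vec_nth[of j] bounded_linear_vec_nth[of i]]
    by simp
  ultimately show ?thesis
    unfolding mexp_def using bounded_linear.sums[of "\<lambda>x. x $ i $ j"] summable_sums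
    by (fastforce simp: divide_inverse mult.commute)
qed

lemma mat_pow_scaleR: "mat_pow (s *\<^sub>R (M::real^'j::finite^'j)) k = s ^ k *\<^sub>R mat_pow M k"
  by (induction k) (simp_all add: vec_eq_iff matrix_matrix_mult_def sum_distrib_left mult_ac)

lemma sums_mexp_mult_vec:
  fixes K :: "real^'j::finite^'j"
  shows "(\<lambda>m. t ^ m / fact m * (mat_pow K m *v v) $ l) sums (mexp (t *\<^sub>R K) *v v) $ l"
proof -
  have "(\<lambda>m. \<Sum>j\<in>UNIV. mat_pow (t *\<^sub>R K) m $ l $ j / fact m * v $ j)
      sums (\<Sum>j\<in>UNIV. mexp (t *\<^sub>R K) $ l $ j * v $ j)"
    by (intro sums_sum sums_mult2 sums_mexp_nth)
  then show ?thesis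
    by (simp add: matrix_vector_mult_def mat_pow_scaleR sum_distrib_left mult_ac)
qed

lemma mat_pow_nonneg:
  "(\<And>i j. 0 \<le> (M::real^'j::finite^'j) $ i $ j) \<Longrightarrow> 0 \<le> mat_pow M k $ i $ j"
  by (induction k arbitrary: i j) (auto simp: mat_def matrix_matrix_mult_def intro!: sum_nonneg)

lemma gronwall_iterate:
  fixes C :: "'j::finite \<Rightarrow> real \<Rightarrow> real" and K :: "real^'j^'j"
  assumes K_nonneg: "\<And>l k. 0 \<le> K $ l $ k"
    and cont: "\<And>l. continuous_on {0..T} (C l)"
    and bound: "\<And>l s. s \<in> {0..T} \<Longrightarrow> C l s \<le> M"
    and ineq: "\<And>l t. t \<in> {0..T} \<Longrightarrow>
      C l t \<le> C l 0 + integral {0..t} (\<lambda>s. \<Sum>k\<in>UNIV. K $ l $ k * C k s)"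
  defines "v \<equiv> \<chi> k. C k 0"
  shows "t \<in> {0..T} \<Longrightarrow> C l t \<le> (\<Sum>m<N. t ^ m / fact m * (mat_pow K m *v v) $ l)
    + t ^ N / fact N * (mat_pow K N *v (\<chi> k. M)) $ l"
proof (induction N arbitrary: l t)
  case 0
  then show ?case using bound by simp
next
  case (Suc N)
  let ?w = "\<chi> k. M"
  let ?p = "\<lambda>k s. (\<Sum>m<N. s ^ m / fact m * (mat_pow K m *v v) $ k)
    + s ^ N / fact N * (mat_pow K N *v ?w) $ k"
  let ?q = "\<lambda>k. (\<Sum>m<N. t ^ Suc m / fact (Suc m) * (mat_pow K m *v v) $ k)
    + t ^ Suc N / fact (Suc N) * (mat_pow K N *v ?w) $ k"
  have t: "0 \<le> t" "t \<le> T" using Suc.prems by auto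
  have "((\<lambda>s. \<Sum>k\<in>UNIV. K $ l $ k * ?p k s) has_integral (\<Sum>k\<in>UNIV. K $ l $ k * ?q k)) {0..t}"
    by (intro has_integral_sum has_integral_mult_right has_integral_add has_integral_mult_left
        has_integral_power_div_fact t) auto
  moreover have "(\<lambda>s. \<Sum>k\<in>UNIV. K $ l $ k * C k s) integrable_on {0..t}"
    using t
    by (intro integrable_continuous_real continuous_intros continuous_on_subset[OF cont]) auto
  ultimately have "integral {0..t} (\<lambda>s. \<Sum>k\<in>UNIV. K $ l $ k * C k s)
      \<le> (\<Sum>k\<in>UNIV. K $ l $ k * ?q k)"
    using t Suc.IH
    by (intro has_integral_le[OF integrable_integral])
      (auto intro!: sum_mono mult_left_mono K_nonneg)
  also have "(\<Sum>k\<in>UNIV. K $ l $ k * ?q k)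
      = (\<Sum>m<N. t ^ Suc m / fact (Suc m) * (K *v (mat_pow K m *v v)) $ l)
        + t ^ Suc N / fact (Suc N) * (K *v (mat_pow K N *v ?w)) $ l"
    by (simp add: matrix_vector_mult_def[of K] distrib_left sum.distrib sum_distrib_left mult_ac
        sum.swap[where A = UNIV and B = "{..<N}"])
  also have "\<dots> = (\<Sum>m<N. t ^ Suc m / fact (Suc m) * (mat_pow K (Suc m) *v v) $ l)
      + t ^ Suc N / fact (Suc N) * (mat_pow K (Suc N) *v ?w) $ l"
    by (simp add: matrix_vector_mul_assoc)
  finally have "C l t \<le> (C l 0 + (\<Sum>m<N. t ^ Suc m / fact (Suc m) * (mat_pow K (Suc m) *v v) $ l))
      + t ^ Suc N / fact (Suc N) * (mat_pow K (Suc N) *v ?w) $ l"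
    using ineq[of t l] t by (simp add: add.assoc)
  also have "C l 0 + (\<Sum>m<N. t ^ Suc m / fact (Suc m) * (mat_pow K (Suc m) *v v) $ l)
      = (\<Sum>m<Suc N. t ^ m / fact m * (mat_pow K m *v v) $ l)"
    by (simp only: sum.lessThan_Suc_shift) (simp add: v_def)
  finally show ?case .
qed

lemma gronwall_mexp:
  fixes C :: "'j::finite \<Rightarrow> real \<Rightarrow> real" and K :: "real^'j^'j"
  assumes "\<And>l k. 0 \<le> K $ l $ k"
    and "\<And>l. continuous_on {0..T} (C l)"
    and "\<And>l s. s \<in> {0..T} \<Longrightarrow> C l s \<le> M"
    and "\<And>l t. t \<in> {0..T} \<Longrightarrow>
      C l t \<le> C l 0 + integral {0..t} (\<lambda>s. \<Sum>k\<in>UNIV. K $ l $ k * C k s)"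
    and "t \<in> {0..T}"
  shows "C l t \<le> (mexp (t *\<^sub>R K) *v (\<chi> k. C k 0)) $ l"
proof (rule LIMSEQ_le_const)
  let ?v = "\<chi> k. C k 0" and ?w = "\<chi> k. M"
  have "(\<lambda>N. \<Sum>m<N. t ^ m / fact m * (mat_pow K m *v ?v) $ l) \<longlonglongrightarrow> (mexp (t *\<^sub>R K) *v ?v) $ l"
    using sums_mexp_mult_vec by (simp add: sums_def)
  moreover have "(\<lambda>N. t ^ N / fact N * (mat_pow K N *v ?w) $ l) \<longlonglongrightarrow> 0"
    using sums_mexp_mult_vec by (intro summable_LIMSEQ_zero sums_summable)
  ultimately show "(\<lambda>N. (\<Sum>m<N. t ^ m / fact m * (mat_pow K m *v ?v) $ l)
      + t ^ N / fact N * (mat_pow K N *v ?w) $ l) \<longlonglongrightarrow> (mexp (t *\<^sub>R K) *v ?v) $ l"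
    using tendsto_add by fastforce
  show "\<exists>N. \<forall>n\<ge>N. C l t \<le> (\<Sum>m<n. t ^ m / fact m * (mat_pow K m *v ?v) $ l)
      + t ^ n / fact n * (mat_pow K n *v ?w) $ l"
    by (intro exI allI impI) (rule gronwall_iterate[OF assms])
qed

lemma mat_pow_diag_similar:
  fixes K H :: "real^'j::finite^'j"
  assumes "\<And>l k. \<sigma> l * K $ l $ k = H $ l $ k * \<sigma> k"
  shows "\<sigma> l * mat_pow K m $ l $ i = mat_pow H m $ l $ i * \<sigma> i"
proof (induction m arbitrary: l)
  case 0
  then show ?case by (simp add: mat_def)
next
  case (Suc m)
  have "\<sigma> l * mat_pow K (Suc m) $ l $ i = (\<Sum>k\<in>UNIV. (\<sigma> l * K $ l $ k) * mat_pow K m $ k $ i)"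
    by (simp add: matrix_matrix_mult_def sum_distrib_left mult.assoc)
  also have "\<dots> = (\<Sum>k\<in>UNIV. H $ l $ k * mat_pow H m $ k $ i) * \<sigma> i"
    by (simp add: assms mult.assoc Suc.IH sum_distrib_right)
  finally show ?case by (simp add: matrix_matrix_mult_def)
qed

lemma mexp_diag_similar:
  fixes K H :: "real^'j::finite^'j"
  assumes "\<And>l k. \<sigma> l * K $ l $ k = H $ l $ k * \<sigma> k"
  shows "\<sigma> l * mexp (t *\<^sub>R K) $ l $ i = mexp (t *\<^sub>R H) $ l $ i * \<sigma> i"
proof -
  have "\<sigma> l * (mat_pow (t *\<^sub>R K) m $ l $ i / fact m) = t ^ m / fact m * (\<sigma> l * mat_pow K m $ l $ i)"
    for m by (simp add: mat_pow_scaleR)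
  also have "\<dots> m = mat_pow (t *\<^sub>R H) m $ l $ i / fact m * \<sigma> i" for m
    by (simp add: mat_pow_diag_similar[OF assms] mat_pow_scaleR)
  finally have "(\<lambda>m. mat_pow (t *\<^sub>R H) m $ l $ i / fact m * \<sigma> i)
      sums (\<sigma> l * mexp (t *\<^sub>R K) $ l $ i)"
    using sums_mult[OF sums_mexp_nth, of "\<sigma> l" "t *\<^sub>R K" l i] by simp
  moreover have "(\<lambda>m. mat_pow (t *\<^sub>R H) m $ l $ i / fact m * \<sigma> i)
      sums (mexp (t *\<^sub>R H) $ l $ i * \<sigma> i)"
    by (intro sums_mult2 sums_mexp_nth)
  ultimately show ?thesis by (rule sums_unique2)
qed

lemma mexp_nth_nonneg:
  fixes M :: "real^'j::finite^'j"
  assumes "\<And>i j. 0 \<le> M $ i $ j"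
  shows "0 \<le> mexp M $ i $ j"
  by (rule sums_le[OF _ sums_zero sums_mexp_nth]) (simp add: mat_pow_nonneg assms)

lemma mat_pow_commute: "mat_pow M k ** M = M ** mat_pow (M::'a::semiring_1^'j::finite^'j) k"
proof (induction k)
  case (Suc k)
  have "mat_pow M (Suc k) ** M = M ** (mat_pow M k ** M)" by (simp add: matrix_mul_assoc)
  then show ?case by (simp add: Suc.IH)
qed simp

lemma transpose_mat_pow:
  "transpose (mat_pow (M::'a::comm_semiring_1^'j::finite^'j) k) = mat_pow (transpose M) k"
  by (induction k) (simp_all add: transpose_mat matrix_transpose_mul mat_pow_commute)

lemma mexp_nth_transpose:
  fixes M :: "real^'j::finite^'j"
  shows "mexp (transpose M) $ i $ j = mexp M $ j $ i"
proof -
  have "mat_pow (transpose M) k $ i $ j = mat_pow M k $ j $ i" for k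
    unfolding transpose_mat_pow[symmetric] by (simp add: transpose_def)
  then have "(\<lambda>k. mat_pow M k $ j $ i / fact k) sums mexp (transpose M) $ i $ j"
    using sums_mexp_nth[of "transpose M" i j] by simp
  then show ?thesis using sums_mexp_nth[of M j i] by (rule sums_unique2)
qed

lemma walk_if_mat_pow_nth_nonzero:
  fixes M :: "'a::semiring_1^'j::finite^'j"
  assumes "\<And>i k. M $ i $ k \<noteq> 0 \<Longrightarrow> E i k"
  shows "mat_pow M m $ i $ j \<noteq> 0 \<Longrightarrow> walk E m i j"
proof (induction m arbitrary: i)
  case 0
  then show ?case by (simp add: mat_def walk0 split: if_splits)
next
  case (Suc m)
  then have "(\<Sum>k\<in>UNIV. M $ i $ k * mat_pow M m $ k $ j) \<noteq> 0"
    by (simp add: matrix_matrix_mult_def)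
  then obtain k where "M $ i $ k * mat_pow M m $ k $ j \<noteq> 0"
    by (meson sum.neutral)
  then have "M $ i $ k \<noteq> 0" "mat_pow M m $ k $ j \<noteq> 0" by auto
  then show ?case by (rule walkS[OF assms Suc.IH])
qed

lemma gdist_le_if_walk: "walk E m i j \<Longrightarrow> gdist E i j \<le> enat m"
  by (auto simp: gdist_def intro: Least_le)

lemma eq_if_gdist_eq_0:
  assumes "gdist E i j = 0"
  shows "i = j"
proof -
  have "\<exists>n. walk E n i j" using assms by (auto simp: gdist_def split: if_splits)
  then have "walk E 0 i j"
    using assms LeastI_ex[of "\<lambda>n. walk E n i j"] by (simp add: gdist_def zero_enat_def)
  then show ?thesis by (rule walk.cases) auto
qed

lemma mexp_nth_eq_0_if_gdist_infinite:
  fixes M :: "real^'j::finite^'j"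
  assumes "\<And>i k. M $ i $ k \<noteq> 0 \<Longrightarrow> E i k" and "gdist E i j = \<infinity>"
  shows "mexp M $ i $ j = 0"
proof -
  have "mat_pow M m $ i $ j = 0" for m
    using walk_if_mat_pow_nth_nonzero[OF assms(1)] gdist_le_if_walk assms(2) by fastforce
  then show ?thesis using sums_mexp_nth[of M i j] by (simp add: sums_0 sums_unique2)
qed

(* The kernel of the integral inequality for the commutators C_l; conjugation by diag(sqrt |h|)
   turns it into Hmat. *)
definition hop_kernel :: "('j \<Rightarrow> 'j \<Rightarrow> bool) \<Rightarrow> ('j \<Rightarrow> real) \<Rightarrow> real^'j^'j" where
  "hop_kernel E h = (\<chi> l k. if E l k then 2 * \<bar>h k\<bar> else 0)"

lemma weighted_mexp_hop_kernel_le: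
  fixes H :: "real^'j::finite^'j" and v :: "real^'j"
  assumes H: "\<And>l k. H $ l $ k = (if E l k then 2 * sqrt (\<bar>h l\<bar> * \<bar>h k\<bar>) else 0)"
    and E_sym: "\<And>l k. E l k \<longleftrightarrow> E k l"
    and v_supp: "\<And>i. i \<notin> X \<Longrightarrow> v $ i = 0" and v_bound: "\<And>i. 0 \<le> v $ i" "\<And>i. v $ i \<le> V"
    and "0 \<le> s"
  shows "\<bar>h k\<bar> * (mexp (s *\<^sub>R hop_kernel E h) *v v) $ k
    \<le> V * (\<Sum>i\<in>X. sqrt \<bar>h i * h k\<bar> * mexp (s *\<^sub>R H) $ i $ k)"
proof -
  let ?\<sigma> = "\<lambda>i. sqrt \<bar>h i\<bar>"
  have similar: "?\<sigma> l * hop_kernel E h $ l $ k = H $ l $ k * ?\<sigma> k" for l k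
    by (simp add: hop_kernel_def H real_sqrt_mult mult_ac)
  have "transpose H = H" by (simp add: vec_eq_iff transpose_def H E_sym mult.commute)
  then have sym: "mexp (s *\<^sub>R H) $ k $ i = mexp (s *\<^sub>R H) $ i $ k" for i
    by (metis mexp_nth_transpose transpose_scalar)
  have nonneg: "0 \<le> mexp (s *\<^sub>R H) $ k $ i" for i
    using \<open>0 \<le> s\<close> by (intro mexp_nth_nonneg) (simp add: H)
  have sq: "?\<sigma> k * (?\<sigma> k * x) = \<bar>h k\<bar> * x" for x by (simp add: mult.assoc[symmetric])
  have "\<bar>h k\<bar> * (mexp (s *\<^sub>R hop_kernel E h) *v v) $ k
      = ?\<sigma> k * (\<Sum>i\<in>UNIV. (?\<sigma> k * mexp (s *\<^sub>R hop_kernel E h) $ k $ i) * v $ i)"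
    by (simp add: matrix_vector_mult_def sum_distrib_left mult.assoc sq)
  also have "\<dots> = ?\<sigma> k * (\<Sum>i\<in>X. mexp (s *\<^sub>R H) $ k $ i * ?\<sigma> i * v $ i)"
    using v_supp by (simp add: mexp_diag_similar[OF similar] sum.mono_neutral_right)
  also have "\<dots> \<le> ?\<sigma> k * (\<Sum>i\<in>X. mexp (s *\<^sub>R H) $ k $ i * ?\<sigma> i * V)"
    by (intro mult_left_mono sum_mono) (simp_all add: nonneg v_bound)
  also have "\<dots> = V * (\<Sum>i\<in>X. sqrt \<bar>h i * h k\<bar> * mexp (s *\<^sub>R H) $ i $ k)"
    by (simp add: sum_distrib_left sym abs_mult real_sqrt_mult mult_ac)
  finally show ?thesis .
qed

section \<open>Commutator growth on the commutativity graph\<close>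

lemma norm_bracket_evolve_term_le_mexp:
  fixes g :: "'j::finite \<Rightarrow> 'n::finite opmat" and h :: "'j \<Rightarrow> real" and a :: "'n opmat"
  assumes herm: "\<And>j. adj (g j) = g j" and norm_g: "\<And>j. norm (g j) = 1"
    and commute: "\<And>i j. \<not> E i j \<Longrightarrow> g i * g j = g j * g i"
    and "0 \<le> t"
  defines "K \<equiv> imag_unit * (\<Sum>j\<in>UNIV. h j *\<^sub>R g j)"
  defines "C \<equiv> \<lambda>l s. norm (bracket (evolve K a s) (g l))"
  shows "C l t \<le> (mexp (t *\<^sub>R hop_kernel E h) *v (\<chi> k. C k 0)) $ l"
proof (rule gronwall_mexp[where T = t and M = "2 * norm a"])
  show "0 \<le> hop_kernel E h $ l $ k" for l k
    by (simp add: hop_kernel_def)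
  show "continuous_on {0..t} (C l)" for l
    unfolding C_def bracket_def by (intro continuous_intros continuous_on_evolve)
  show "C l s \<le> 2 * norm a" for l s
  proof -
    have "C l s \<le> 2 * norm (evolve K a s) * norm (g l)"
      unfolding C_def by (rule norm_bracket_le)
    also have "\<dots> \<le> 2 * norm a"
      using norm_evolve_le[OF norm_exp_imag_hermitian_sum_le[of g, OF herm]]
      by (simp add: K_def norm_g)
    finally show ?thesis .
  qed
  show "C l \<tau> \<le> C l 0 + integral {0..\<tau>} (\<lambda>s. \<Sum>k\<in>UNIV. hop_kernel E h $ l $ k * C k s)"
    if "\<tau> \<in> {0..t}" for l \<tau>
  proof -
    have "(\<Sum>k\<in>UNIV. hop_kernel E h $ l $ k * C k s)
        = (\<Sum>k\<in>UNIV. if E l k then 2 * (\<bar>h k\<bar> * C k s) else 0)" for s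
      by (rule sum.cong) (simp_all add: hop_kernel_def)
    then have eq: "(\<lambda>s. 2 * norm (g l) * (\<Sum>j\<in>{k. E l k}. \<bar>h j\<bar> * C j s))
        = (\<lambda>s. \<Sum>k\<in>UNIV. hop_kernel E h $ l $ k * C k s)"
      by (simp add: fun_eq_iff norm_g sum_distrib_left sum.inter_filter[symmetric])
    have "C l \<tau> \<le> C l 0 + integral {0..\<tau>} (\<lambda>s. 2 * norm (g l) * (\<Sum>j\<in>{k. E l k}. \<bar>h j\<bar> * C j s))"
      unfolding C_def K_def evolve_0
      by (rule norm_bracket_evolve_le_terms[OF herm]) (use commute that in auto)
    then show ?thesis by (simp only: eq)
  qed
  show "t \<in> {0..t}" using \<open>0 \<le> t\<close> by simp
qed

lemma sum_norm_bracket_evolve_terms_le: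
  fixes g :: "'j::finite \<Rightarrow> 'n::finite opmat" and h :: "'j \<Rightarrow> real" and H :: "real^'j^'j"
  assumes herm: "\<And>j. adj (g j) = g j" and norm_g: "\<And>j. norm (g j) = 1"
    and commute: "\<And>i j. \<not> E i j \<Longrightarrow> g i * g j = g j * g i"
    and E_sym: "\<And>l k. E l k \<longleftrightarrow> E k l"
    and H: "\<And>l k. H $ l $ k = (if E l k then 2 * sqrt (\<bar>h l\<bar> * \<bar>h k\<bar>) else 0)"
    and a_commute: "\<And>j. j \<notin> X \<Longrightarrow> g j * a = a * g j"
    and "0 \<le> s"
  defines "K \<equiv> imag_unit * (\<Sum>j\<in>UNIV. h j *\<^sub>R g j)"
  shows "(\<Sum>k\<in>Y. \<bar>h k\<bar> * norm (bracket (evolve K a s) (g k)))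
    \<le> 2 * norm a * (\<Sum>i\<in>X. \<Sum>k\<in>Y. sqrt \<bar>h i * h k\<bar> * mexp (s *\<^sub>R H) $ i $ k)"
proof -
  define C where "C l s = norm (bracket (evolve K a s) (g l))" for l s
  define v where "v = (\<chi> k. C k 0)"
  have v_supp: "v $ i = 0" if "i \<notin> X" for i
    using a_commute[OF that] by (simp add: v_def C_def bracket_def)
  have v_bound: "0 \<le> v $ i" "v $ i \<le> 2 * norm a" for i
    using norm_bracket_le[of a "g i"] by (simp_all add: v_def C_def norm_g)
  have "(\<Sum>k\<in>Y. \<bar>h k\<bar> * C k s) \<le> (\<Sum>k\<in>Y. \<bar>h k\<bar> * (mexp (s *\<^sub>R hop_kernel E h) *v v) $ k)"
    unfolding C_def v_def K_def
    by (intro sum_mono mult_left_mono norm_bracket_evolve_term_le_mexp[OF herm norm_g commute]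
        \<open>0 \<le> s\<close> abs_ge_zero)
  also have "\<dots> \<le> (\<Sum>k\<in>Y. 2 * norm a * (\<Sum>i\<in>X. sqrt \<bar>h i * h k\<bar> * mexp (s *\<^sub>R H) $ i $ k))"
    by (intro sum_mono weighted_mexp_hop_kernel_le[OF H E_sym v_supp v_bound \<open>0 \<le> s\<close>])
  finally show ?thesis
    by (simp add: C_def sum_distrib_left sum.swap[of _ Y X])
qed

lemma norm_bracket_evolve_le_pair_sum:
  fixes g :: "'j::finite \<Rightarrow> 'n::finite opmat" and h :: "'j \<Rightarrow> real" and H :: "real^'j^'j"
  assumes herm: "\<And>j. adj (g j) = g j" and norm_g: "\<And>j. norm (g j) = 1"
    and commute: "\<And>i j. \<not> E i j \<Longrightarrow> g i * g j = g j * g i"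
    and E_sym: "\<And>l k. E l k \<longleftrightarrow> E k l"
    and H: "\<And>l k. H $ l $ k = (if E l k then 2 * sqrt (\<bar>h l\<bar> * \<bar>h k\<bar>) else 0)"
    and a_commute: "\<And>j. j \<notin> X \<Longrightarrow> g j * a = a * g j"
    and b_commute: "\<And>j. j \<notin> Y \<Longrightarrow> g j * b = b * g j"
    and "0 \<le> t"
    and G_cont: "\<And>i k. continuous_on {0..t} (G i k)"
    and G: "\<And>i k s. i \<in> X \<Longrightarrow> k \<in> Y \<Longrightarrow> s \<in> {0..t} \<Longrightarrow> mexp (s *\<^sub>R H) $ i $ k \<le> G i k s"
  shows "norm (bracket (evolve (imag_unit * (\<Sum>j\<in>UNIV. h j *\<^sub>R g j)) a t) b) - norm (bracket a b)
    \<le> 4 * norm a * norm b * (\<Sum>i\<in>X. \<Sum>k\<in>Y. sqrt \<bar>h i * h k\<bar> * integral {0..t} (G i k))"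
proof -
  define K where "K = imag_unit * (\<Sum>j\<in>UNIV. h j *\<^sub>R g j)"
  define C where "C l s = norm (bracket (evolve K a s) (g l))" for l s
  define R where "R = (\<lambda>s. 4 * norm a * norm b * (\<Sum>i\<in>X. \<Sum>k\<in>Y. sqrt \<bar>h i * h k\<bar> * G i k s))"
  have "norm (bracket (evolve K a t) b)
      \<le> norm (bracket a b) + integral {0..t} (\<lambda>s. 2 * norm b * (\<Sum>k\<in>Y. \<bar>h k\<bar> * C k s))"
    unfolding C_def K_def using b_commute \<open>0 \<le> t\<close> by (intro norm_bracket_evolve_le_terms herm) auto
  also have "integral {0..t} (\<lambda>s. 2 * norm b * (\<Sum>k\<in>Y. \<bar>h k\<bar> * C k s)) \<le> integral {0..t} R"
  proof (rule integral_le)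
    show "(\<lambda>s. 2 * norm b * (\<Sum>k\<in>Y. \<bar>h k\<bar> * C k s)) integrable_on {0..t}"
      unfolding C_def bracket_def
      by (intro integrable_continuous_real continuous_intros continuous_on_evolve)
    show "R integrable_on {0..t}"
      unfolding R_def by (intro integrable_continuous_real continuous_intros G_cont)
    show "2 * norm b * (\<Sum>k\<in>Y. \<bar>h k\<bar> * C k s) \<le> R s" if s: "s \<in> {0..t}" for s
    proof -
      have "(\<Sum>k\<in>Y. \<bar>h k\<bar> * C k s)
          \<le> 2 * norm a * (\<Sum>i\<in>X. \<Sum>k\<in>Y. sqrt \<bar>h i * h k\<bar> * mexp (s *\<^sub>R H) $ i $ k)"
        unfolding C_def K_def using s
        by (intro sum_norm_bracket_evolve_terms_le[OF herm norm_g commute E_sym H a_commute]) auto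
      also have "\<dots> \<le> 2 * norm a * (\<Sum>i\<in>X. \<Sum>k\<in>Y. sqrt \<bar>h i * h k\<bar> * G i k s)"
        using s G by (intro mult_left_mono sum_mono) auto
      finally have "(\<Sum>k\<in>Y. \<bar>h k\<bar> * C k s)
          \<le> 2 * norm a * (\<Sum>i\<in>X. \<Sum>k\<in>Y. sqrt \<bar>h i * h k\<bar> * G i k s)" .
      from mult_left_mono[OF this, of "2 * norm b"] show ?thesis
        unfolding R_def by (simp add: mult_ac)
    qed
  qed
  also have "integral {0..t} R
      = 4 * norm a * norm b * (\<Sum>i\<in>X. \<Sum>k\<in>Y. sqrt \<bar>h i * h k\<bar> * integral {0..t} (G i k))"
  proof -
    have "(\<lambda>s. sqrt \<bar>h i * h k\<bar> * G i k s) integrable_on {0..t}" for i k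
      by (intro integrable_continuous_real continuous_intros G_cont)
    then show ?thesis by (simp add: R_def integral_sum integrable_sum)
  qed
  finally show ?thesis by (simp add: K_def)
qed

lemma of_mat_commute_if_commutator_eq_0:
  "commutator M N = 0 \<Longrightarrow> of_mat M * of_mat N = of_mat N * of_mat M"
  by (simp add: commutator_def flip: of_mat_mult)

lemma cedge_sym: "cedge \<gamma> i j \<longleftrightarrow> cedge \<gamma> j i"
proof -
  have "commutator (\<gamma> i) (\<gamma> j) = - commutator (\<gamma> j) (\<gamma> i)" by (simp add: commutator_def)
  then show ?thesis by (auto simp: cedge_def)
qed

lemma of_mat_commute_if_not_cedge:
  "\<not> cedge \<gamma> i j \<Longrightarrow> of_mat (\<gamma> i) * of_mat (\<gamma> j) = of_mat (\<gamma> j) * of_mat (\<gamma> i)"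
  by (cases "i = j") (auto simp: cedge_def intro: of_mat_commute_if_commutator_eq_0)

lemma of_mat_commute_if_notin_supp:
  "j \<notin> supp \<gamma> A \<Longrightarrow> of_mat (\<gamma> j) * of_mat A = of_mat A * of_mat (\<gamma> j)"
  by (simp add: supp_def of_mat_commute_if_commutator_eq_0)

lemma adj_of_mat_hermitian: "hermitian M \<Longrightarrow> adj (of_mat M) = of_mat M"
  by (simp add: adj.abs_eq hermitian_def)

lemma opnorm_commutator: "opnorm (commutator A B) = norm (bracket (of_mat A) (of_mat B))"
  by (simp add: norm_of_mat[symmetric] of_mat_commutator bracket_def)

lemma opnorm_commutator_heis_le_pair_sum:
  fixes \<gamma> :: "'j::finite \<Rightarrow> complex^'n::finite^'n"
  assumes "\<And>j. hermitian (\<gamma> j)" and "\<And>j. opnorm (\<gamma> j) = 1" and "0 \<le> t"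
    and "\<And>i j. continuous_on {0..t} (G i j)"
    and "\<And>i j s. i \<in> supp \<gamma> A \<Longrightarrow> j \<in> supp \<gamma> B \<Longrightarrow> s \<in> {0..t} \<Longrightarrow>
      mexp (s *\<^sub>R Hmat \<gamma> h) $ i $ j \<le> G i j s"
  shows "opnorm (commutator (heis (\<Sum>j\<in>UNIV. mscale (complex_of_real (h j)) (\<gamma> j)) t A) B)
      - opnorm (commutator A B)
    \<le> 4 * opnorm A * opnorm B
      * (\<Sum>i\<in>supp \<gamma> A. \<Sum>j\<in>supp \<gamma> B. sqrt \<bar>h i * h j\<bar> * integral {0..t} (G i j))"
  unfolding opnorm_commutator of_mat_heis of_mat_sum_mscale_of_real
  unfolding norm_of_mat[symmetric]
  using assms
  by (intro norm_bracket_evolve_le_pair_sum[where E = "cedge \<gamma>" and H = "Hmat \<gamma> h"]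
      adj_of_mat_hermitian of_mat_commute_if_not_cedge of_mat_commute_if_notin_supp)
    (auto simp: norm_of_mat cedge_sym Hmat_def)

section \<open>The bound in terms of graph distances\<close>

lemma plus_one_power_le_exp_mult_power:
  assumes "1 \<le> D"
  shows "(real D + 1) ^ D \<le> exp 1 * real D ^ D"
proof -
  have D: "real D > 0" using assms by simp
  have "(1 + 1 / real D) ^ D \<le> exp (1 / real D) ^ D"
    using D by (intro power_mono exp_ge_add_one_self) simp
  also have "\<dots> = exp 1"
    using D by (simp flip: exp_of_nat_mult)
  finally have "(1 + 1 / real D) ^ D \<le> exp 1" .
  moreover have "(real D + 1) ^ D = real D ^ D * (1 + 1 / real D) ^ D"
    using D by (simp add: power_mult_distrib[symmetric] field_simps)
  ultimately show ?thesis
    using D by (simp add: mult.commute mult_left_mono)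
qed

lemma exp_diff_mult_power_le_power:
  assumes "1 \<le> D" "D \<le> d"
  shows "exp (real (d - D)) * real D ^ d \<le> real d ^ d"
proof -
  define y where "y = real (d - D) / real d"
  have d: "real d > 0" using assms by simp
  have "exp y * (1 - y) \<le> exp y * exp (- y)"
    using exp_ge_add_one_self[of "- y"] by (intro mult_left_mono) simp_all
  also have "\<dots> = 1" by (simp add: exp_minus field_simps)
  finally have "exp y * real D \<le> real d"
    using assms d by (simp add: y_def field_simps of_nat_diff)
  then have "(exp y * real D) ^ d \<le> real d ^ d" by (rule power_mono) simp
  then show ?thesis
    using d by (simp add: power_mult_distrib y_def flip: exp_of_nat_mult)
qed

lemma power_div_le_exp_mult_power:
  fixes x :: real
  assumes D: "1 \<le> D" "D \<le> d" and x: "0 \<le> x" "x \<le> real D"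
  shows "x ^ (d + 1) / (real d ^ d * (real d + 1))
    \<le> exp 1 * exp (real D - real d) * (x / (real D + 1)) ^ (D + 1)"
proof -
  define k where "k = d - D"
  have dk: "d = D + k" using D by (simp add: k_def)
  have pos: "0 < real d ^ d * (real d + 1)" "0 < exp (real k) * (real D + 1) ^ (D + 1)"
    using D by simp_all
  have "real D ^ k * (exp (real k) * (real D + 1) ^ (D + 1))
      = (real D + 1) ^ D * (real D + 1) * (exp (real k) * real D ^ k)"
    by (simp add: mult_ac)
  also have "\<dots> \<le> (exp 1 * real D ^ D) * (real d + 1) * (exp (real k) * real D ^ k)"
    using D plus_one_power_le_exp_mult_power[OF D(1)] by (intro mult_right_mono mult_mono) simp_all
  also have "\<dots> = exp 1 * (real d + 1) * (exp (real k) * real D ^ d)"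
    by (simp add: dk power_add mult_ac)
  also have "\<dots> \<le> exp 1 * (real d + 1) * real d ^ d"
    using exp_diff_mult_power_le_power[OF D] by (intro mult_left_mono) (simp_all add: k_def)
  finally have coeff: "real D ^ k / (real d ^ d * (real d + 1))
      \<le> exp 1 / (exp (real k) * (real D + 1) ^ (D + 1))"
    using pos by (simp add: field_simps)
  have "x ^ (d + 1) \<le> x ^ (D + 1) * real D ^ k"
    using x by (simp add: dk power_add mult_ac mult_left_mono power_mono)
  then have "x ^ (d + 1) / (real d ^ d * (real d + 1))
      \<le> x ^ (D + 1) * (real D ^ k / (real d ^ d * (real d + 1)))"
    using pos by (simp add: divide_right_mono)
  also have "\<dots> \<le> x ^ (D + 1) * (exp 1 / (exp (real k) * (real D + 1) ^ (D + 1)))"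
    using coeff x by (intro mult_left_mono) simp_all
  also have "\<dots> = exp 1 * exp (real D - real d) * (x / (real D + 1)) ^ (D + 1)"
    by (simp add: dk exp_minus power_divide field_simps)
  finally show ?thesis .
qed

(* The assumed bound c (u s / d)^d on [e^(sH)]_ij at graph distance d; for d = \<infinity> the entry
   itself vanishes. *)
definition lr_profile :: "real \<Rightarrow> real \<Rightarrow> enat \<Rightarrow> real \<Rightarrow> real" where
  "lr_profile c u d s = (case d of enat n \<Rightarrow> c * (u * s / real n) ^ n | \<infinity> \<Rightarrow> 0)"

lemma lr_profile_enat: "lr_profile c u (enat n) = (\<lambda>s. c * (u / real n) ^ n * s ^ n)"
  by (simp add: fun_eq_iff lr_profile_def power_mult_distrib power_divide)

lemma lr_profile_infinity: "lr_profile c u \<infinity> = (\<lambda>s. 0)"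
  by (simp add: fun_eq_iff lr_profile_def)

lemma continuous_on_lr_profile: "continuous_on S (lr_profile c u d)"
  by (cases d) (simp_all add: lr_profile_enat lr_profile_infinity continuous_intros)

lemma integral_lr_profile_le:
  assumes "0 < u" "0 \<le> c" "1 \<le> D" "enat D \<le> d" "0 \<le> t" "t \<le> real D / u"
  shows "integral {0..t} (lr_profile c u d)
    \<le> c * exp 1 / u * (u * t / (real D + 1)) ^ (D + 1)
      * (if d = \<infinity> then 0 else exp (real D - real (the_enat d)))"
proof (cases d)
  case (enat n)
  have D: "1 \<le> D" "D \<le> n" using assms enat by auto
  have "((\<lambda>s. (c * (u / n) ^ n * fact n) * (s ^ n / fact n)) has_integral
      (c * (u / n) ^ n * fact n) * (t ^ Suc n / fact (Suc n))) {0..t}"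
    by (intro has_integral_mult_right has_integral_power_div_fact \<open>0 \<le> t\<close>)
  moreover have "lr_profile c u d = (\<lambda>s. (c * (u / n) ^ n * fact n) * (s ^ n / fact n))"
    by (simp add: enat lr_profile_enat fun_eq_iff)
  ultimately have "integral {0..t} (lr_profile c u d)
      = (c * (u / n) ^ n * fact n) * (t ^ Suc n / fact (Suc n))"
    by (simp only: integral_unique)
  also have "\<dots> = c * (u / n) ^ n * (t ^ Suc n / (real n + 1))"
  proof -
    have "(fact n :: real) / fact (Suc n) = 1 / (real n + 1)"
      by (simp add: fact_Suc divide_simps)
    moreover have "(fact n :: real) * (t ^ Suc n / fact (Suc n))
        = t ^ Suc n * (fact n / fact (Suc n))"
      by (simp only: times_divide_eq_right mult.commute)
    ultimately have "(fact n :: real) * (t ^ Suc n / fact (Suc n)) = t ^ Suc n / (real n + 1)"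
      by simp
    then show ?thesis by (simp only: mult.assoc)
  qed
  also have "\<dots> = c / u * ((u * t) ^ (n + 1) / (real n ^ n * (real n + 1)))"
    using \<open>0 < u\<close> D by (simp add: power_mult_distrib power_divide field_simps)
  also have "\<dots> \<le> c / u * (exp 1 * exp (real D - real n) * (u * t / (real D + 1)) ^ (D + 1))"
    using assms by (intro mult_left_mono power_div_le_exp_mult_power D) (simp_all add: field_simps)
  also have "\<dots> = c * exp 1 / u * (u * t / (real D + 1)) ^ (D + 1)
      * (if d = \<infinity> then 0 else exp (real D - real (the_enat d)))"
    by (simp add: enat)
  finally show ?thesis .
qed (simp add: lr_profile_infinity)

lemma gdist_Min_bounds:
  fixes E :: "'j::finite \<Rightarrow> 'j \<Rightarrow> bool"
  assumes "X \<noteq> {}" "Y \<noteq> {}" "X \<inter> Y = {}"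
    and Min: "Min {gdist E i j | i j. i \<in> X \<and> j \<in> Y} = enat D"
  shows "1 \<le> D" and "\<And>i j. i \<in> X \<Longrightarrow> j \<in> Y \<Longrightarrow> enat D \<le> gdist E i j"
proof -
  let ?S = "{gdist E i j | i j. i \<in> X \<and> j \<in> Y}"
  have "?S \<subseteq> range (\<lambda>(i, j). gdist E i j)" by auto
  then have fin: "finite ?S" by (rule finite_subset) simp
  show "enat D \<le> gdist E i j" if "i \<in> X" "j \<in> Y" for i j
  proof -
    have "gdist E i j \<in> ?S" using that by blast
    then show ?thesis unfolding Min[symmetric] by (rule Min_le[OF fin])
  qed
  have "Min ?S \<in> ?S" using fin assms(1,2) by (intro Min_in) auto
  then obtain i j where "i \<in> X" "j \<in> Y" "gdist E i j = enat D" using Min by auto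
  then show "1 \<le> D"
    using assms(3) eq_if_gdist_eq_0[of E i j] by (cases D) (auto simp: zero_enat_def)
qed

lemma mexp_Hmat_le_lr_profile:
  assumes Gbound: "\<And>n t. gdist (cedge \<gamma>) i j = enat n \<Longrightarrow> 1 \<le> n \<Longrightarrow> 0 \<le> t \<Longrightarrow>
      t \<le> real n / u \<Longrightarrow> mexp (t *\<^sub>R Hmat \<gamma> h) $ i $ j \<le> c * (u * t / real n) ^ n"
    and "0 < u" "1 \<le> D" "enat D \<le> gdist (cedge \<gamma>) i j" "0 \<le> s" "s \<le> real D / u"
  shows "mexp (s *\<^sub>R Hmat \<gamma> h) $ i $ j \<le> lr_profile c u (gdist (cedge \<gamma>) i j) s"
proof (cases "gdist (cedge \<gamma>) i j")
  case (enat n)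
  then have "D \<le> n" using assms by simp
  then have "real D / u \<le> real n / u"
    using \<open>0 < u\<close> by (simp add: divide_right_mono)
  then have "s \<le> real n / u" using \<open>s \<le> real D / u\<close> by linarith
  then show ?thesis
    using Gbound[OF enat] assms \<open>D \<le> n\<close> by (simp add: lr_profile_def enat)
next
  case infinity
  have "mexp (s *\<^sub>R Hmat \<gamma> h) $ i $ j = 0"
    by (rule mexp_nth_eq_0_if_gdist_infinite[OF _ infinity]) (auto simp: Hmat_def split: if_splits)
  then show ?thesis by (simp add: lr_profile_infinity infinity)
qed

lemma sum_sum_if_eq_sum_pairs:
  assumes "finite X" "finite Y"
  shows "(\<Sum>i\<in>X. \<Sum>j\<in>Y. if P i j then f i j else 0)
    = (\<Sum>(i, j)\<in>{(i, j). i \<in> X \<and> j \<in> Y \<and> P i j}. f i j)"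
proof -
  have "{(i, j). i \<in> X \<and> j \<in> Y \<and> P i j} = {p \<in> X \<times> Y. P (fst p) (snd p)}" by auto
  then show ?thesis
    using assms by (simp add: sum.cartesian_product sum.inter_filter case_prod_beta)
qed

theorem mainTheorem4:
  fixes \<gamma> :: "'j::finite \<Rightarrow> complex^'n::finite^'n"
    and h :: "'j \<Rightarrow> real"
    and u c :: real
    and A B :: "complex^'n^'n"
    and D :: nat
  assumes herm: "\<And>j. hermitian (\<gamma> j)"
    and norm1: "\<And>j. opnorm (\<gamma> j) = 1"
    and u_pos: "u > 0" and c_pos: "c > 0"
    and Gbound: "\<And>i j n t. gdist (cedge \<gamma>) i j = enat n \<Longrightarrow> 1 \<le> n \<Longrightarrow> 0 \<le> t \<Longrightarrow>
        t \<le> real n / u \<Longrightarrow>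
        mexp (t *\<^sub>R Hmat \<gamma> h) $ i $ j \<le> c * (u * t / real n) ^ n"
    and disj: "supp \<gamma> A \<inter> supp \<gamma> B = {}"
    and X_ne: "supp \<gamma> A \<noteq> {}" and Y_ne: "supp \<gamma> B \<noteq> {}"
    and dXY: "Min {gdist (cedge \<gamma>) i j | i j. i \<in> supp \<gamma> A \<and> j \<in> supp \<gamma> B} = enat D"
  shows "\<forall>t. 0 \<le> t \<and> t \<le> real D / u \<longrightarrow>
    opnorm (commutator (heis (\<Sum>j\<in>UNIV. mscale (complex_of_real (h j)) (\<gamma> j)) t A) B)
      - opnorm (commutator A B)
    \<le> 4 * c * exp 1 / u * opnorm A * opnorm B *
       (\<Sum>(i, j)\<in>{(i, j). i \<in> supp \<gamma> A \<and> j \<in> supp \<gamma> B \<and> gdist (cedge \<gamma>) i j \<noteq> \<infinity>}.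
          sqrt \<bar>h i * h j\<bar> * exp (real D - real (the_enat (gdist (cedge \<gamma>) i j))))
       * (u * t / (real D + 1)) ^ (D + 1)"
proof (intro allI impI)
  fix t assume t: "0 \<le> t \<and> t \<le> real D / u"
  let ?X = "supp \<gamma> A" and ?Y = "supp \<gamma> B" and ?d = "gdist (cedge \<gamma>)"
  let ?w = "\<lambda>i j. sqrt \<bar>h i * h j\<bar> * exp (real D - real (the_enat (?d i j)))"
  let ?Q = "(u * t / (real D + 1)) ^ (D + 1)"
  let ?lhs = "opnorm (commutator (heis (\<Sum>j\<in>UNIV. mscale (complex_of_real (h j)) (\<gamma> j)) t A) B)
      - opnorm (commutator A B)"
  have D: "1 \<le> D" and D_le: "\<And>i j. i \<in> ?X \<Longrightarrow> j \<in> ?Y \<Longrightarrow> enat D \<le> ?d i j"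
    using gdist_Min_bounds[OF X_ne Y_ne disj dXY] by blast+
  have "?lhs \<le> 4 * opnorm A * opnorm B
      * (\<Sum>i\<in>?X. \<Sum>j\<in>?Y. sqrt \<bar>h i * h j\<bar> * integral {0..t} (lr_profile c u (?d i j)))"
    using t D D_le u_pos
    by (intro opnorm_commutator_heis_le_pair_sum herm norm1 continuous_on_lr_profile
        mexp_Hmat_le_lr_profile Gbound) auto
  also have "\<dots> \<le> 4 * opnorm A * opnorm B * (\<Sum>i\<in>?X. \<Sum>j\<in>?Y. sqrt \<bar>h i * h j\<bar> *
      (c * exp 1 / u * ?Q * (if ?d i j = \<infinity> then 0 else exp (real D - real (the_enat (?d i j))))))"
    using t D D_le u_pos c_pos
    by (intro mult_left_mono sum_mono integral_lr_profile_le) (auto simp: opnorm_nonneg)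
  also have "\<dots> = 4 * opnorm A * opnorm B * (c * exp 1 / u * ?Q
      * (\<Sum>i\<in>?X. \<Sum>j\<in>?Y. if ?d i j \<noteq> \<infinity> then ?w i j else 0))"
    unfolding sum_distrib_left by (intro arg_cong[where f = "(*) _"] sum.cong refl) auto
  finally show "?lhs \<le> 4 * c * exp 1 / u * opnorm A * opnorm B
      * (\<Sum>(i, j)\<in>{(i, j). i \<in> ?X \<and> j \<in> ?Y \<and> ?d i j \<noteq> \<infinity>}. ?w i j) * ?Q"
    by (simp only: sum_sum_if_eq_sum_pairs finite)
      (simp only: mult_ac times_divide_eq_left times_divide_eq_right)
qed

end
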